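(* For every set of centers $c^1,\dots,c^k\in\mathbb{R}^d$ and every $\delta\in(0,1)$, the threshold tree $\mathcal{T}$ output by the Threshold Tree Construction algorithm described in the context satisfies $\mathbf{E}[N(\mathcal{T})]\le(1+\delta)k$, where $N(\mathcal{T})$ is the number of leaves of $\mathcal{T}$.
   Context: Threshold tree: rooted binary tree of cells of $\mathbb{R}^d$, root $=\mathbb{R}^d$; an internal node $u$ split by cut $(i,\xi)$ has children $u_{left}=\{y\in u:y_i\le\xi\}$, $u_{right}=\{y\in u: y_i>\xi\}$. A median of a finite nonempty set $S\subset\mathbb{R}^d$ is a point $m$ such that for every coordinate $i$ each of $\{c\in S:c_i<m_i\}$ and $\{c\in S: c_i>m_i\}$ has at most $|S|/2$ elements. Algorithm (input $C=\{c^1,\dots,c^k\}$, $\delta$): set $\varepsilon=\min\{\delta/(15\ln k),1/320\}$. Start with $\mathcal{T}_1$ consisting of a root $r$ with assigned center set $C_r=C$. For $t=1,2,\dots$, while some leaf of $\mathcal{T}_t$ has at least two centers assigned: sample independently $i_t$ uniform in $\{1,\dots,d\}$, $\theta_t$ uniform in $(0,1)$, $\sigma_t$ uniform in $\{\pm1\}$; for every leaf $u$ of $\mathcal{T}_t$ with $|C_u|\ge2$ apply Divide-and-Share with $(i,\theta,\sigma)=(i_t,\theta_t,\sigma_t)$; the resulting tree is $\mathcal{T}_{t+1}$. Divide-and-Share on $u$: let $m^u$ be a median of $C_u$, $R_u=\max_{c\in C_u}\|c-m^u\|_2$, $Left=\{c\in C_u: c_i\le m^u_i+(\sigma+\varepsilon)\sqrt{\theta}R_u\}$,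 $Right=\{c\in C_u: c_i\ge m^u_i+(\sigma-\varepsilon)\sqrt\theta R_u\}$. If both are nonempty, split $u$ by the cut $(i,\,m^u_i+\sigma\sqrt\theta R_u)$ and assign $Left$ to $u_{left}$ and $Right$ to $u_{right}$; otherwise leave $u$ unchanged. The output $\mathcal{T}$ is the final tree. *)

theory Defs
  imports "HOL-Probability.Probability"
begin

text \<open>A leaf carries the set of centers assigned to it;
  an internal node carries its cut (i, xi): the left child is the part of
  the cell with y_i <= xi, the right child the part with y_i > xi.
  The root cell is the whole space.\<close>
datatype ('i, 'p) ttree =
    Leaf "'p set"
  | Node 'i real "('i, 'p) ttree" "('i, 'p) ttree"

fun num_leaves :: "('i, 'p) ttree \<Rightarrow> nat" where
  "num_leaves (Leaf _) = 1"
| "num_leaves (Node _ _ l r) = num_leaves l + num_leaves r"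

definition is_median :: "(real^'d) set \<Rightarrow> real^'d \<Rightarrow> bool" where
  "is_median S m \<longleftrightarrow>
     (\<forall>i. real (card {c\<in>S. c$i < m$i}) \<le> real (card S) / 2 \<and>
          real (card {c\<in>S. c$i > m$i}) \<le> real (card S) / 2)"

definition alg_eps :: "real \<Rightarrow> nat \<Rightarrow> real" where
  "alg_eps \<delta> k = min (\<delta> / (15 * ln (real k))) (1/320)"

definition divide_share ::
  "((real^'d) set \<Rightarrow> real^'d) \<Rightarrow> real \<Rightarrow> 'd \<Rightarrow> real \<Rightarrow> real \<Rightarrow> (real^'d) set
     \<Rightarrow> ('d, real^'d) ttree" where
  "divide_share med eps i \<theta> \<sigma> Cu =
     (let m = med Cu;
          R = Max ((\<lambda>c. norm (c - m)) ` Cu);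
          L = {c\<in>Cu. c$i \<le> m$i + (\<sigma> + eps) * sqrt \<theta> * R};
          Rt = {c\<in>Cu. c$i \<ge> m$i + (\<sigma> - eps) * sqrt \<theta> * R}
      in if L \<noteq> {} \<and> Rt \<noteq> {}
         then Node i (m$i + \<sigma> * sqrt \<theta> * R) (Leaf L) (Leaf Rt)
         else Leaf Cu)"

fun alg_round ::
  "((real^'d) set \<Rightarrow> real^'d) \<Rightarrow> real \<Rightarrow> 'd \<times> real \<times> real
     \<Rightarrow> ('d, real^'d) ttree \<Rightarrow> ('d, real^'d) ttree" where
  "alg_round med eps (i, \<theta>, \<sigma>) (Leaf Cu) =
     (if card Cu \<ge> 2 then divide_share med eps i \<theta> \<sigma> Cu else Leaf Cu)"
| "alg_round med eps x (Node j \<xi> l r) =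
     Node j \<xi> (alg_round med eps x l) (alg_round med eps x r)"

text \<open>The tree T_{t+1} after t rounds, driven by the random sequence omega
  (omega t is the triple (i_t, theta_t, sigma_t) of round t+1).
  Once no leaf has two centers, rounds leave the tree unchanged, so
  running forever models the while-loop.\<close>
fun alg_tree ::
  "((real^'d) set \<Rightarrow> real^'d) \<Rightarrow> real \<Rightarrow> (real^'d) set
     \<Rightarrow> (nat \<Rightarrow> 'd \<times> real \<times> real) \<Rightarrow> nat \<Rightarrow> ('d, real^'d) ttree" where
  "alg_tree med eps C \<omega> 0 = Leaf C"
| "alg_tree med eps C \<omega> (Suc t) = alg_round med eps (\<omega> t) (alg_tree med eps C \<omega> t)"

text \<open>Number of leaves of the output tree: the leaf count is nondecreasing in t
  and stabilises once the algorithm stops, so it is the supremum over t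
  (infinite if the algorithm does not terminate).\<close>
definition output_leaves ::
  "((real^'d) set \<Rightarrow> real^'d) \<Rightarrow> real \<Rightarrow> (real^'d) set
     \<Rightarrow> (nat \<Rightarrow> 'd \<times> real \<times> real) \<Rightarrow> ennreal" where
  "output_leaves med eps C \<omega> = (SUP t. ennreal (real (num_leaves (alg_tree med eps C \<omega> t))))"

definition step_measure :: "('d::finite \<times> real \<times> real) measure" where
  "step_measure = uniform_count_measure (UNIV :: 'd set)
      \<Otimes>\<^sub>M (uniform_measure lborel {0<..<1} \<Otimes>\<^sub>M uniform_count_measure {-1, 1})"

definition rounds_measure :: "(nat \<Rightarrow> 'd::finite \<times> real \<times> real) measure" where
  "rounds_measure = (\<Pi>\<^sub>M t\<in>(UNIV :: nat set). step_measure)"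

end

theory Submission
  imports Defs
begin

(* Choose alpha >= 0 with 2^alpha = ((1+eps)/(1-eps))^2 and consider the potential
   Phi = sum over the leaves u of |C_u|^(1+alpha): every center of a leaf with center set X
   is charged |X|^alpha.  Initially Phi = k^(1+alpha) <= (1+delta) k, and Phi is at least the
   number of leaves, so it suffices that a Divide-and-Share step on a leaf with s >= 2 centers
   does not increase Phi in expectation.  Orient the cut so that a = sigma (c_i - m_i) is the
   signed distance of a center c from the median towards the cut.  The far part contains only
   centers with a > 0, hence at most s/2 of them by the median property, so c is charged at
   most (s/2)^alpha there and at most s^alpha in the near part.  For a > 0, c lies in the near
   part iff theta >= p = (a/((1+eps)R))^2 and in the far part iff theta <= q = (a/((1-eps)R))^2,
   so its expected charge is at most (s/2)^alpha p + s^alpha (1-p) + (s/2)^alpha (q-p), which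
   is exactly s^alpha because q = 2^alpha p.  Hence the expected potential never increases,
   and monotone convergence bounds the expected number of leaves of the output tree. *)

section \<open>The leaves of the constructed trees\<close>

fun leaf_sets :: "('i, 'p) ttree \<Rightarrow> 'p set list" where
  "leaf_sets (Leaf S) = [S]"
| "leaf_sets (Node _ _ l r) = leaf_sets l @ leaf_sets r"

lemma num_leaves_eq_length_leaf_sets: "num_leaves T = length (leaf_sets T)"
  by (induction T) auto

definition split_leaf ::
  "((real^'d) set \<Rightarrow> real^'d) \<Rightarrow> real \<Rightarrow> 'd \<times> real \<times> real \<Rightarrow> (real^'d) set
     \<Rightarrow> (real^'d) set list" where
  "split_leaf med eps x S = leaf_sets (alg_round med eps x (Leaf S))"

definition refine_leaves ::
  "((real^'d) set \<Rightarrow> real^'d) \<Rightarrow> real \<Rightarrow> 'd \<times> real \<times> real \<Rightarrow> (real^'d) set list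
     \<Rightarrow> (real^'d) set list" where
  "refine_leaves med eps x Ls = concat (map (split_leaf med eps x) Ls)"

(* Unlike the trees, whose cuts are real numbers, the lists of leaf center sets range over
   the countable set lists (Pow C), which keeps all measurability arguments discrete. *)
primrec leaves_after ::
  "((real^'d) set \<Rightarrow> real^'d) \<Rightarrow> real \<Rightarrow> (real^'d) set list
     \<Rightarrow> (nat \<Rightarrow> 'd \<times> real \<times> real) \<Rightarrow> nat \<Rightarrow> (real^'d) set list" where
  "leaves_after med eps Ls \<omega> 0 = Ls"
| "leaves_after med eps Ls \<omega> (Suc t) = refine_leaves med eps (\<omega> t) (leaves_after med eps Ls \<omega> t)"

lemma split_leaf_eq:
  "split_leaf med eps (i, \<theta>, \<sigma>) S =
     (if 2 \<le> card S then
        (let m = med S;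
             R = Max ((\<lambda>c. norm (c - m)) ` S);
             L = {c\<in>S. c$i \<le> m$i + (\<sigma> + eps) * sqrt \<theta> * R};
             Rt = {c\<in>S. c$i \<ge> m$i + (\<sigma> - eps) * sqrt \<theta> * R}
         in if L \<noteq> {} \<and> Rt \<noteq> {} then [L, Rt] else [S])
      else [S])"
  by (auto simp: split_leaf_def divide_share_def Let_def)

lemma leaf_sets_alg_round:
  "leaf_sets (alg_round med eps x T) = refine_leaves med eps x (leaf_sets T)"
  by (induction T) (auto simp: refine_leaves_def split_leaf_def)

lemma leaf_sets_alg_tree: "leaf_sets (alg_tree med eps C \<omega> t) = leaves_after med eps [C] \<omega> t"
  by (induction t) (auto simp: leaf_sets_alg_round)

lemma leaves_after_Suc_shift:
  "leaves_after med eps Ls \<omega> (Suc t) =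
     leaves_after med eps (refine_leaves med eps (\<omega> 0) Ls) (\<lambda>n. \<omega> (Suc n)) t"
  by (induction t) auto

lemma length_le_length_refine_leaves: "length Ls \<le> length (refine_leaves med eps x Ls)"
proof (induction Ls)
  case (Cons S Ls)
  have "1 \<le> length (split_leaf med eps x S)"
    by (cases x) (simp add: split_leaf_eq Let_def)
  with Cons show ?case by (simp add: refine_leaves_def)
qed (simp add: refine_leaves_def)

lemma split_leaf_subsets:
  "S \<in> Pow C - {{}} \<Longrightarrow> split_leaf med eps x S \<in> lists (Pow C - {{}})"
  by (cases x) (auto simp: split_leaf_eq Let_def)

lemma refine_leaves_subsets:
  "Ls \<in> lists (Pow C - {{}}) \<Longrightarrow> refine_leaves med eps x Ls \<in> lists (Pow C - {{}})"
  by (induction Ls) (auto simp: refine_leaves_def split_leaf_subsets)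

lemma leaves_after_subsets:
  "Ls \<in> lists (Pow C - {{}}) \<Longrightarrow> leaves_after med eps Ls \<omega> t \<in> lists (Pow C - {{}})"
  by (induction t) (simp_all add: refine_leaves_subsets)

section \<open>Measurability\<close>

lemma sets_step_measure:
  "sets (step_measure :: ('d::finite \<times> real \<times> real) measure) =
     sets (count_space UNIV \<Otimes>\<^sub>M (borel \<Otimes>\<^sub>M count_space {-1, 1}))"
  unfolding step_measure_def
  by (intro sets_pair_measure_cong) (auto simp: sets_uniform_count_measure)

lemma measurable_step_measure_sections:
  fixes f :: "'d::finite \<times> real \<times> real \<Rightarrow> 'b"
  assumes "\<And>i \<sigma>. (\<lambda>\<theta>. f (i, \<theta>, \<sigma>)) \<in> measurable borel N"
  shows "f \<in> measurable step_measure N"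
proof -
  let ?I = "(UNIV :: 'd set) \<times> {-1::real, 1}"
  note step_cong = measurable_cong_sets[OF sets_step_measure refl]
  have "(\<lambda>x::'d \<times> real \<times> real. (fst x, snd (snd x))) \<in>
      measurable (count_space UNIV \<Otimes>\<^sub>M (borel \<Otimes>\<^sub>M count_space {-1, 1}))
        (count_space UNIV \<Otimes>\<^sub>M count_space {-1, 1})"
    by (intro measurable_Pair measurable_compose[OF measurable_snd measurable_snd] measurable_fst)
  also have "count_space (UNIV :: 'd set) \<Otimes>\<^sub>M count_space {-1::real, 1} = count_space ?I"
    by (rule pair_measure_countable) auto
  finally have discrete: "(\<lambda>x::'d \<times> real \<times> real. (fst x, snd (snd x))) \<in> measurable step_measure (count_space ?I)"
    unfolding step_cong .
  have \<theta>: "(\<lambda>x::'d \<times> real \<times> real. fst (snd x)) \<in> measurable step_measure borel"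
    unfolding step_cong by measurable
  have sections: "(\<lambda>x::'d \<times> real \<times> real. f (fst a, fst (snd x), snd a)) \<in> measurable step_measure N"
    for a
    using measurable_compose[OF \<theta> assms[of "fst a" "snd a"]] by simp
  have "(\<lambda>x. (\<lambda>a x. f (fst a, fst (snd x), snd a)) (fst x, snd (snd x)) x) \<in> measurable step_measure N"
    by (rule measurable_compose_countable'[OF sections discrete]) simp
  then show ?thesis by simp
qed

lemma measurable_Collect_count_space_Pow:
  assumes "finite S" and "\<And>c. c \<in> S \<Longrightarrow> Measurable.pred M (P c)"
  shows "(\<lambda>x. {c\<in>S. P c x}) \<in> measurable M (count_space (Pow S))"
proof (subst measurable_count_space_eq2)
  show "finite (Pow S)" using assms by simp
  show "(\<lambda>x. {c\<in>S. P c x}) \<in> space M \<rightarrow> Pow S \<and>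
    (\<forall>X\<in>Pow S. (\<lambda>x. {c\<in>S. P c x}) -` {X} \<inter> space M \<in> sets M)"
  proof safe
    fix X assume "X \<subseteq> S"
    then have "(\<lambda>x. {c\<in>S. P c x}) -` {X} \<inter> space M = {x\<in>space M. \<forall>c\<in>S. P c x \<longleftrightarrow> c \<in> X}"
      by auto
    also have "\<dots> \<in> sets M"
    proof (intro sets.sets_Collect_finite_All[OF _ assms(1)])
      fix c assume "c \<in> S"
      then have "Measurable.pred M (\<lambda>x. P c x \<longleftrightarrow> c \<in> X)"
        using assms(2) by (cases "c \<in> X") (simp_all add: pred_intros_logic(2))
      then show "{x\<in>space M. P c x \<longleftrightarrow> c \<in> X} \<in> sets M"
        by (simp add: pred_def)
    qed
    finally show "(\<lambda>x. {c\<in>S. P c x}) -` {X} \<inter> space M \<in> sets M" .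
  qed
qed

lemma measurable_count_space_combine:
  assumes "f \<in> measurable M (count_space A)" and "g \<in> measurable M (count_space B)"
    and "countable A" and "\<And>a b. a \<in> A \<Longrightarrow> b \<in> B \<Longrightarrow> h a b \<in> D"
  shows "(\<lambda>x. h (f x) (g x)) \<in> measurable M (count_space D)"
proof (rule measurable_compose_countable'[OF _ assms(1,3)])
  fix a assume "a \<in> A"
  then have "h a \<in> measurable (count_space B) (count_space D)"
    using assms(4) by (auto simp: measurable_count_space_eq1)
  from measurable_compose[OF assms(2) this]
  show "(\<lambda>x. h a (g x)) \<in> measurable M (count_space D)" .
qed

lemma measurable_ennreal_count_space:
  "(\<lambda>x. ennreal (f x)) \<in> measurable (count_space A) borel"
  by (simp add: measurable_count_space_eq1)

lemma countable_lists_Pow: "finite C \<Longrightarrow> countable (lists (Pow C))"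
  by (intro countable_lists countable_finite) simp

lemma measurable_split_leaf_section:
  assumes "finite C" "S \<subseteq> C"
  shows "(\<lambda>\<theta>. split_leaf med eps (i, \<theta>, \<sigma>) S) \<in> measurable borel (count_space (lists (Pow C)))"
proof -
  define m where "m = med S"
  define R where "R = Max ((\<lambda>c. norm (c - m)) ` S)"
  define L where "L = (\<lambda>\<theta>. {c\<in>S. c$i \<le> m$i + (\<sigma> + eps) * sqrt \<theta> * R})"
  define Rt where "Rt = (\<lambda>\<theta>. {c\<in>S. c$i \<ge> m$i + (\<sigma> - eps) * sqrt \<theta> * R})"
  define h where "h = (\<lambda>X Y. if 2 \<le> card S \<and> X \<noteq> {} \<and> Y \<noteq> {} then [X, Y] else [S])"
  have "finite S" using assms finite_subset by auto
  have "L \<in> measurable borel (count_space (Pow S))"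
    unfolding L_def by (rule measurable_Collect_count_space_Pow[OF \<open>finite S\<close>]) measurable
  moreover have "Rt \<in> measurable borel (count_space (Pow S))"
    unfolding Rt_def by (rule measurable_Collect_count_space_Pow[OF \<open>finite S\<close>]) measurable
  ultimately have "(\<lambda>\<theta>. h (L \<theta>) (Rt \<theta>)) \<in> measurable borel (count_space (lists (Pow C)))"
    by (rule measurable_count_space_combine)
      (use \<open>finite S\<close> assms(2) in \<open>auto simp: h_def countable_finite\<close>)
  moreover have "(\<lambda>\<theta>. split_leaf med eps (i, \<theta>, \<sigma>) S) = (\<lambda>\<theta>. h (L \<theta>) (Rt \<theta>))"
    by (simp add: fun_eq_iff split_leaf_eq h_def L_def Rt_def m_def R_def Let_def)
  ultimately show ?thesis by simp
qed

lemma measurable_split_leaf: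
  "finite C \<Longrightarrow> S \<subseteq> C \<Longrightarrow>
     (\<lambda>x. split_leaf med eps x S) \<in> measurable step_measure (count_space (lists (Pow C)))"
  by (intro measurable_step_measure_sections measurable_split_leaf_section)

lemma measurable_refine_leaves:
  assumes "finite C"
  shows "Ls \<in> lists (Pow C) \<Longrightarrow>
    (\<lambda>x. refine_leaves med eps x Ls) \<in> measurable step_measure (count_space (lists (Pow C)))"
proof (induction Ls)
  case Nil
  then show ?case by (simp add: refine_leaves_def)
next
  case (Cons S Ls)
  have "(\<lambda>x. refine_leaves med eps x (S # Ls)) = (\<lambda>x. split_leaf med eps x S @ refine_leaves med eps x Ls)"
    by (simp add: refine_leaves_def)
  moreover have "S \<subseteq> C" "Ls \<in> lists (Pow C)" using Cons.prems by auto
  ultimately show ?case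
    using countable_lists_Pow[OF assms]
    by (simp only:) (rule measurable_count_space_combine[OF measurable_split_leaf[OF assms] Cons.IH]; simp)
qed

lemma measurable_leaves_after:
  assumes "finite C" "Ls \<in> lists (Pow C)"
  shows "(\<lambda>\<omega>. leaves_after med eps Ls \<omega> t) \<in> measurable rounds_measure (count_space (lists (Pow C)))"
proof (induction t)
  case 0
  then show ?case using assms by simp
next
  case (Suc t)
  have "(\<lambda>\<omega>. \<omega> t) \<in> measurable rounds_measure step_measure"
    unfolding rounds_measure_def by (rule measurable_component_singleton) simp
  then have "(\<lambda>\<omega>. refine_leaves med eps (\<omega> t) Ls') \<in> measurable rounds_measure (count_space (lists (Pow C)))"
    if "Ls' \<in> lists (Pow C)" for Ls'
    using measurable_compose measurable_refine_leaves[OF assms(1) that] by blast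
  from measurable_compose_countable'[OF this Suc countable_lists_Pow[OF assms(1)]]
  show ?case by simp
qed

section \<open>The potential\<close>

definition cell_potential :: "real \<Rightarrow> 'a set \<Rightarrow> real" where
  "cell_potential \<alpha> X = real (card X) * real (card X) powr \<alpha>"

definition potential :: "real \<Rightarrow> 'a set list \<Rightarrow> real" where
  "potential \<alpha> Ls = (\<Sum>X\<leftarrow>Ls. cell_potential \<alpha> X)"

lemma potential_append: "potential \<alpha> (Ls @ Ms) = potential \<alpha> Ls + potential \<alpha> Ms"
  by (simp add: potential_def)

lemma potential_nonneg: "0 \<le> potential \<alpha> Ls"
  by (induction Ls) (auto simp: potential_def cell_potential_def)

lemma length_le_potential:
  assumes "0 \<le> \<alpha>" and "Ls \<in> lists {X. finite X \<and> X \<noteq> {}}"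
  shows "real (length Ls) \<le> potential \<alpha> Ls"
  using assms(2)
proof (induction Ls)
  case (Cons X Ls)
  then have "1 \<le> real (card X)" by (simp add: Suc_le_eq card_gt_0_iff)
  with assms(1) have "1 \<le> cell_potential \<alpha> X"
    unfolding cell_potential_def by (metis ge_one_powr_ge_zero mult_mono' mult_1 zero_le_one)
  with Cons show ?case by (simp add: potential_def)
qed (simp add: potential_def)

lemma cell_potential_eq_sum:
  "finite S \<Longrightarrow> X \<subseteq> S \<Longrightarrow>
     cell_potential \<alpha> X = (\<Sum>c\<in>S. if c \<in> X then real (card X) powr \<alpha> else 0)"
  unfolding cell_potential_def by (simp add: sum.If_cases Int_absorb1)

lemma split_potential_le_charges:
  fixes a :: "'p \<Rightarrow> real"
  assumes "finite S" "S \<noteq> {}" and median: "2 * card {c\<in>S. 0 < a c} \<le> card S"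
    and "0 < lo" "lo \<le> hi" "0 \<le> \<alpha>"
  defines "F \<equiv> {c\<in>S. lo \<le> a c}" and "N \<equiv> {c\<in>S. a c \<le> hi}"
  shows "(if F \<noteq> {} \<and> N \<noteq> {} then cell_potential \<alpha> F + cell_potential \<alpha> N
          else cell_potential \<alpha> S)
      \<le> (\<Sum>c\<in>S. (if lo \<le> a c then (card S / 2) powr \<alpha> else 0)
                + (if a c \<le> hi then card S powr \<alpha> else 0))"
    (is "?split \<le> (\<Sum>c\<in>S. ?charge c)")
proof (cases "F = {}")
  case True
  then have "?charge c = card S powr \<alpha>" if "c \<in> S" for c
    using that \<open>lo \<le> hi\<close> by (auto simp: F_def)
  with True show ?thesis by (simp add: cell_potential_def)
next
  case False
  have "F \<subseteq> {c\<in>S. 0 < a c}" using \<open>0 < lo\<close> by (auto simp: F_def)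
  then have "card F \<le> card {c\<in>S. 0 < a c}" using \<open>finite S\<close> by (intro card_mono) auto
  with median have F_powr: "real (card F) powr \<alpha> \<le> (card S / 2) powr \<alpha>"
    using \<open>0 \<le> \<alpha>\<close> by (intro powr_mono2) auto
  have "N \<subseteq> S" by (auto simp: N_def)
  then have N_powr: "real (card N) powr \<alpha> \<le> card S powr \<alpha>"
    using card_mono[OF \<open>finite S\<close>] \<open>0 \<le> \<alpha>\<close> by (intro powr_mono2) auto
  have "N \<noteq> {}"
  proof
    assume "N = {}"
    then have "{c\<in>S. 0 < a c} = S" using \<open>0 < lo\<close> \<open>lo \<le> hi\<close> by (force simp: N_def)
    with median \<open>finite S\<close> \<open>S \<noteq> {}\<close> show False by simp
  qed
  have "F \<subseteq> S" by (auto simp: F_def)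
  have "?split = cell_potential \<alpha> F + cell_potential \<alpha> N"
    using False \<open>N \<noteq> {}\<close> by simp
  also have "\<dots> = (\<Sum>c\<in>S. (if c \<in> F then real (card F) powr \<alpha> else 0)
                        + (if c \<in> N then real (card N) powr \<alpha> else 0))"
    unfolding cell_potential_eq_sum[OF \<open>finite S\<close> \<open>F \<subseteq> S\<close>]
      cell_potential_eq_sum[OF \<open>finite S\<close> \<open>N \<subseteq> S\<close>] sum.distrib ..
  also have "\<dots> \<le> (\<Sum>c\<in>S. ?charge c)"
    using F_powr N_powr by (intro sum_mono add_mono) (auto simp: F_def N_def)
  finally show ?thesis .
qed

section \<open>Charging a center\<close>

lemma le_mult_sqrt_iff:
  assumes "0 < b" "0 \<le> \<theta>"
  shows "a \<le> b * sqrt \<theta> \<longleftrightarrow> a \<le> 0 \<or> (a / b)\<^sup>2 \<le> \<theta>"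
proof (cases "a \<le> 0")
  case False
  then have "a \<le> b * sqrt \<theta> \<longleftrightarrow> a / b \<le> sqrt \<theta>"
    using assms by (simp add: pos_divide_le_eq mult.commute)
  also have "\<dots> \<longleftrightarrow> (a / b)\<^sup>2 \<le> \<theta>"
    using False assms by (metis real_le_rsqrt power_mono real_sqrt_pow2 divide_nonneg_pos not_le order.strict_implies_order)
  finally show ?thesis using False by simp
next
  case True
  moreover have "0 \<le> b * sqrt \<theta>" using assms by simp
  ultimately show ?thesis by auto
qed

lemma mult_sqrt_le_iff:
  assumes "0 < b" "0 < \<theta>"
  shows "b * sqrt \<theta> \<le> a \<longleftrightarrow> 0 < a \<and> \<theta> \<le> (a / b)\<^sup>2"
proof (cases "0 < a")
  case True
  then have "b * sqrt \<theta> \<le> a \<longleftrightarrow> sqrt \<theta> \<le> a / b"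
    using assms by (simp add: pos_le_divide_eq mult.commute)
  also have "\<dots> \<longleftrightarrow> \<theta> \<le> (a / b)\<^sup>2"
    using True assms real_le_lsqrt sqrt_le_D by (metis divide_pos_pos less_le)
  finally show ?thesis using True by simp
next
  case False
  then show ?thesis using assms by (smt (verit) mult_pos_pos real_sqrt_gt_zero)
qed

definition charge_bound :: "real \<Rightarrow> real \<Rightarrow> real \<Rightarrow> real \<Rightarrow> real \<Rightarrow> real \<Rightarrow> real" where
  "charge_bound \<alpha> s \<epsilon> R a \<theta> =
     (if a \<le> 0 then s powr \<alpha>
      else (s/2) powr \<alpha> * indicator {0<..<(a / ((1+\<epsilon>) * R))\<^sup>2} \<theta>
         + s powr \<alpha> * indicator {(a / ((1+\<epsilon>) * R))\<^sup>2..1} \<theta>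
         + (s/2) powr \<alpha> * indicator {(a / ((1+\<epsilon>) * R))\<^sup>2..(a / ((1-\<epsilon>) * R))\<^sup>2} \<theta>)"

lemma charge_le_charge_bound:
  assumes "0 \<le> \<alpha>" "2 \<le> s" "0 \<le> \<epsilon>" "\<epsilon> < 1" "0 < R" "0 < \<theta>" "\<theta> < 1"
  shows "(if (1-\<epsilon>) * (sqrt \<theta> * R) \<le> a then (s/2) powr \<alpha> else 0)
           + (if a \<le> (1+\<epsilon>) * (sqrt \<theta> * R) then s powr \<alpha> else 0)
         \<le> charge_bound \<alpha> s \<epsilon> R a \<theta>"
proof -
  have far: "(1-\<epsilon>) * (sqrt \<theta> * R) \<le> a \<longleftrightarrow> 0 < a \<and> \<theta> \<le> (a / ((1-\<epsilon>) * R))\<^sup>2"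
    using mult_sqrt_le_iff[of "(1-\<epsilon>) * R" \<theta> a] assms by (simp add: mult_ac)
  have near: "a \<le> (1+\<epsilon>) * (sqrt \<theta> * R) \<longleftrightarrow> a \<le> 0 \<or> (a / ((1+\<epsilon>) * R))\<^sup>2 \<le> \<theta>"
    using le_mult_sqrt_iff[of "(1+\<epsilon>) * R" \<theta> a] assms by (simp add: mult_ac)
  have "(s/2) powr \<alpha> \<le> s powr \<alpha>"
    using assms by (intro powr_mono2) auto
  then show ?thesis
    unfolding far near charge_bound_def using assms by (auto simp: indicator_def)
qed

lemma nn_integral_charge_bound:
  assumes "0 \<le> \<epsilon>" "\<epsilon> < 1" "0 < R" "\<bar>a\<bar> \<le> R" "0 \<le> s"
    and alpha: "2 powr \<alpha> = ((1+\<epsilon>)/(1-\<epsilon>))\<^sup>2"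
  shows "(\<integral>\<^sup>+\<theta>. ennreal (charge_bound \<alpha> s \<epsilon> R a \<theta>) * indicator {0<..<1} \<theta> \<partial>lborel)
           \<le> ennreal (s powr \<alpha>)"
proof (cases "a \<le> 0")
  case True
  then show ?thesis
    by (simp add: charge_bound_def nn_integral_cmult_indicator)
next
  case False
  define p where "p = (a / ((1+\<epsilon>) * R))\<^sup>2"
  define q where "q = (a / ((1-\<epsilon>) * R))\<^sup>2"
  define A where "A = (s/2) powr \<alpha>"
  define B where "B = s powr \<alpha>"
  have "0 \<le> p" by (simp add: p_def)
  have "a / ((1+\<epsilon>) * R) \<le> 1"
    using assms False by (simp add: divide_le_eq) (smt (verit) mult_le_cancel_right1)
  then have "p \<le> 1"
    using False assms by (simp add: p_def power_le_one)
  have "a / ((1-\<epsilon>) * R) = a / ((1+\<epsilon>) * R) * ((1+\<epsilon>)/(1-\<epsilon>))"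
    using \<open>0 \<le> \<epsilon>\<close> \<open>\<epsilon> < 1\<close> \<open>0 < R\<close> by (simp add: divide_simps)
  then have q_eq: "q = p * ((1+\<epsilon>)/(1-\<epsilon>))\<^sup>2"
    by (simp only: p_def q_def power_mult_distrib)
  moreover have "1 \<le> ((1+\<epsilon>)/(1-\<epsilon>))\<^sup>2"
    using assms by (simp add: one_le_power field_simps)
  ultimately have "p \<le> q"
    using \<open>0 \<le> p\<close> mult_left_mono[of 1 _ p] by simp
  have "A * q = B * p"
    using \<open>0 \<le> s\<close> by (simp add: A_def B_def q_eq alpha[symmetric] powr_divide)
  have "0 \<le> A" "0 \<le> B" by (simp_all add: A_def B_def)
  have "(\<integral>\<^sup>+\<theta>. ennreal (charge_bound \<alpha> s \<epsilon> R a \<theta>) * indicator {0<..<1} \<theta> \<partial>lborel)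
      \<le> (\<integral>\<^sup>+\<theta>. ennreal A * indicator {0<..<p} \<theta> + ennreal B * indicator {p..1} \<theta>
                  + ennreal A * indicator {p..q} \<theta> \<partial>lborel)"
    using False \<open>0 \<le> A\<close> \<open>0 \<le> B\<close>
    by (intro nn_integral_mono) (auto simp: charge_bound_def indicator_def p_def q_def A_def B_def)
  also have "\<dots> = ennreal (A * p + B * (1 - p) + A * (q - p))"
    using \<open>0 \<le> p\<close> \<open>p \<le> 1\<close> \<open>p \<le> q\<close> \<open>0 \<le> A\<close> \<open>0 \<le> B\<close>
    by (simp add: nn_integral_add nn_integral_cmult_indicator ennreal_mult ennreal_plus[symmetric])
  also have "A * p + B * (1 - p) + A * (q - p) = B"
    using \<open>A * q = B * p\<close> by (simp add: algebra_simps)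
  finally show ?thesis by (simp add: B_def)
qed

section \<open>One Divide-and-Share step\<close>

lemma Max_norm_diff_pos:
  fixes m :: "'a::real_normed_vector"
  assumes "finite S" "2 \<le> card S"
  shows "0 < Max ((\<lambda>c. norm (c - m)) ` S)"
proof -
  have "\<not> S \<subseteq> {m}"
  proof
    assume "S \<subseteq> {m}"
    then have "card S \<le> 1" using card_mono[of "{m}" S] by simp
    with assms show False by simp
  qed
  then obtain c where "c \<in> S" "c \<noteq> m" by auto
  then have "0 < norm (c - m)" by simp
  also have "\<dots> \<le> Max ((\<lambda>c. norm (c - m)) ` S)"
    using assms \<open>c \<in> S\<close> by (intro Max_ge) auto
  finally show ?thesis .
qed

lemma component_diff_le_Max_norm_diff:
  fixes m :: "real^'d"
  assumes "finite S" "c \<in> S"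
  shows "\<bar>c$i - m$i\<bar> \<le> Max ((\<lambda>c. norm (c - m)) ` S)"
proof -
  have "\<bar>(c - m)$i\<bar> \<le> norm (c - m)" by (rule component_le_norm_cart)
  also have "\<dots> \<le> Max ((\<lambda>c. norm (c - m)) ` S)" using assms by (intro Max_ge) auto
  finally show ?thesis by simp
qed

lemma is_median_card_positive_side:
  assumes "is_median S m" "\<sigma> \<in> {-1, 1}"
  shows "2 * card {c\<in>S. 0 < \<sigma> * (c$i - m$i)} \<le> card S"
proof -
  have above: "real (card {c\<in>S. c$i > m$i}) \<le> card S / 2"
    and below: "real (card {c\<in>S. c$i < m$i}) \<le> card S / 2"
    using assms(1) by (auto simp: is_median_def)
  show ?thesis
  proof (cases "\<sigma> = 1")
    case True
    then have "{c\<in>S. 0 < \<sigma> * (c$i - m$i)} = {c\<in>S. c$i > m$i}" by auto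
    then show ?thesis using above by simp
  next
    case False
    with assms(2) have "{c\<in>S. 0 < \<sigma> * (c$i - m$i)} = {c\<in>S. c$i < m$i}" by auto
    then show ?thesis using below by simp
  qed
qed

lemma potential_split_leaf:
  fixes med :: "(real^'d) set \<Rightarrow> real^'d" and eps \<theta> :: real and i :: 'd
  assumes "2 \<le> card S" "\<sigma> \<in> {-1, 1}"
  defines "m \<equiv> med S"
  defines "R \<equiv> Max ((\<lambda>c. norm (c - m)) ` S)"
  defines "F \<equiv> {c\<in>S. (1-eps) * (sqrt \<theta> * R) \<le> \<sigma> * (c$i - m$i)}"
    and "N \<equiv> {c\<in>S. \<sigma> * (c$i - m$i) \<le> (1+eps) * (sqrt \<theta> * R)}"
  shows "potential \<alpha> (split_leaf med eps (i, \<theta>, \<sigma>) S) =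
     (if F \<noteq> {} \<and> N \<noteq> {} then cell_potential \<alpha> F + cell_potential \<alpha> N else cell_potential \<alpha> S)"
proof -
  define L where "L = {c\<in>S. c$i \<le> m$i + (\<sigma> + eps) * sqrt \<theta> * R}"
  define Rt where "Rt = {c\<in>S. c$i \<ge> m$i + (\<sigma> - eps) * sqrt \<theta> * R}"
  have split: "split_leaf med eps (i, \<theta>, \<sigma>) S = (if L \<noteq> {} \<and> Rt \<noteq> {} then [L, Rt] else [S])"
    using assms(1) by (simp add: split_leaf_eq L_def Rt_def m_def R_def Let_def)
  show ?thesis
  proof (cases "\<sigma> = 1")
    case True
    then have "L = N" "Rt = F" by (auto simp: L_def Rt_def F_def N_def algebra_simps)
    then show ?thesis unfolding split by (simp add: potential_def add.commute conj_commute)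
  next
    case False
    with assms(2) have "\<sigma> = -1" by simp
    then have "L = F" "Rt = N" by (auto simp: L_def Rt_def F_def N_def algebra_simps)
    then show ?thesis unfolding split by (simp add: potential_def)
  qed
qed

lemma potential_split_leaf_le:
  fixes S :: "(real^'d) set"
  assumes "finite S" "2 \<le> card S" "is_median S (med S)" "\<sigma> \<in> {-1, 1}"
    and "0 \<le> eps" "eps < 1" "0 < \<theta>" "\<theta> < 1" "0 \<le> \<alpha>"
  defines "m \<equiv> med S"
  defines "R \<equiv> Max ((\<lambda>c. norm (c - m)) ` S)"
  shows "potential \<alpha> (split_leaf med eps (i, \<theta>, \<sigma>) S)
           \<le> (\<Sum>c\<in>S. charge_bound \<alpha> (card S) eps R (\<sigma> * (c$i - m$i)) \<theta>)"
proof -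
  have "0 < R" unfolding R_def using assms(1,2) by (rule Max_norm_diff_pos)
  have "S \<noteq> {}" using assms(2) by auto
  have "potential \<alpha> (split_leaf med eps (i, \<theta>, \<sigma>) S)
      \<le> (\<Sum>c\<in>S. (if (1-eps) * (sqrt \<theta> * R) \<le> \<sigma> * (c$i - m$i) then (card S / 2) powr \<alpha> else 0)
                + (if \<sigma> * (c$i - m$i) \<le> (1+eps) * (sqrt \<theta> * R) then card S powr \<alpha> else 0))"
    unfolding potential_split_leaf[OF assms(2,4)] m_def[symmetric] R_def[symmetric]
    using assms \<open>0 < R\<close> \<open>S \<noteq> {}\<close> is_median_card_positive_side[OF assms(3,4)]
    by (intro split_potential_le_charges) (simp_all add: m_def)
  also have "\<dots> \<le> (\<Sum>c\<in>S. charge_bound \<alpha> (card S) eps R (\<sigma> * (c$i - m$i)) \<theta>)"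
    using assms \<open>0 < R\<close> by (intro sum_mono charge_le_charge_bound) auto
  finally show ?thesis .
qed

lemma nn_integral_potential_split_leaf_le:
  fixes S :: "(real^'d) set"
  assumes "finite S" "2 \<le> card S" "is_median S (med S)" "\<sigma> \<in> {-1, 1}"
    and "0 \<le> eps" "eps < 1" "0 \<le> \<alpha>" "2 powr \<alpha> = ((1+eps)/(1-eps))\<^sup>2"
  shows "(\<integral>\<^sup>+\<theta>. ennreal (potential \<alpha> (split_leaf med eps (i, \<theta>, \<sigma>) S)) * indicator {0<..<1} \<theta> \<partial>lborel)
           \<le> cell_potential \<alpha> S"
proof -
  define m where "m = med S"
  define R where "R = Max ((\<lambda>c. norm (c - m)) ` S)"
  define H where "H = (\<lambda>c \<theta>. ennreal (charge_bound \<alpha> (card S) eps R (\<sigma> * (c$i - m$i)) \<theta>))"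
  have "0 < R" unfolding R_def using assms(1,2) by (rule Max_norm_diff_pos)
  have "\<bar>\<sigma> * (c$i - m$i)\<bar> \<le> R" if "c \<in> S" for c
    using component_diff_le_Max_norm_diff[OF assms(1) that, of i m] assms(4)
    by (auto simp: R_def abs_mult)
  then have H_int: "(\<integral>\<^sup>+\<theta>. H c \<theta> * indicator {0<..<1} \<theta> \<partial>lborel) \<le> card S powr \<alpha>" if "c \<in> S" for c
    unfolding H_def using assms that \<open>0 < R\<close> by (intro nn_integral_charge_bound) auto
  have "ennreal (potential \<alpha> (split_leaf med eps (i, \<theta>, \<sigma>) S)) \<le> (\<Sum>c\<in>S. H c \<theta>)"
    if "0 < \<theta>" "\<theta> < 1" for \<theta>
  proof -
    have "0 \<le> charge_bound \<alpha> (card S) eps R a \<theta>" for a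
      by (simp add: charge_bound_def)
    with potential_split_leaf_le[where med = med and i = i, OF assms(1-6) that assms(7)] show ?thesis
      unfolding H_def m_def R_def by (simp add: sum_ennreal ennreal_leI)
  qed
  then have "(\<integral>\<^sup>+\<theta>. ennreal (potential \<alpha> (split_leaf med eps (i, \<theta>, \<sigma>) S)) * indicator {0<..<1} \<theta> \<partial>lborel)
      \<le> (\<integral>\<^sup>+\<theta>. (\<Sum>c\<in>S. H c \<theta> * indicator {0<..<1} \<theta>) \<partial>lborel)"
    by (intro nn_integral_mono) (auto simp: indicator_def)
  also have "\<dots> = (\<Sum>c\<in>S. \<integral>\<^sup>+\<theta>. H c \<theta> * indicator {0<..<1} \<theta> \<partial>lborel)"
    by (intro nn_integral_sum) (simp add: H_def charge_bound_def)
  also have "\<dots> \<le> (\<Sum>c\<in>S. ennreal (card S powr \<alpha>))"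
    by (intro sum_mono H_int)
  also have "\<dots> = cell_potential \<alpha> S"
    by (simp add: cell_potential_def ennreal_mult ennreal_of_nat_eq_real_of_nat)
  finally show ?thesis .
qed

lemma nn_integral_potential_split_leaf_section:
  fixes S :: "(real^'d) set"
  assumes "finite C" "S \<subseteq> C" "2 \<le> card S \<Longrightarrow> is_median S (med S)" "\<sigma> \<in> {-1, 1}"
    and "0 \<le> eps" "eps < 1" "0 \<le> \<alpha>" "2 powr \<alpha> = ((1+eps)/(1-eps))\<^sup>2"
  shows "(\<integral>\<^sup>+\<theta>. potential \<alpha> (split_leaf med eps (i, \<theta>, \<sigma>) S) \<partial>uniform_measure lborel {0<..<1})
           \<le> cell_potential \<alpha> S"
proof (cases "2 \<le> card S")
  case False
  then have "split_leaf med eps (i, \<theta>, \<sigma>) S = [S]" for \<theta>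
    by (simp add: split_leaf_eq)
  moreover have "prob_space (uniform_measure lborel {0<..<1::real})"
    by (intro prob_space_uniform_measure) auto
  ultimately show ?thesis
    by (simp add: potential_def prob_space.emeasure_space_1)
next
  case True
  have "(\<lambda>\<theta>. split_leaf med eps (i, \<theta>, \<sigma>) S) \<in> measurable lborel (count_space (lists (Pow C)))"
    using measurable_split_leaf_section[OF assms(1,2)] by (simp add: measurable_cong_sets[OF sets_lborel refl])
  then have "(\<lambda>\<theta>. ennreal (potential \<alpha> (split_leaf med eps (i, \<theta>, \<sigma>) S))) \<in> borel_measurable lborel"
    by (rule measurable_compose[OF _ measurable_ennreal_count_space])
  then have "(\<integral>\<^sup>+\<theta>. potential \<alpha> (split_leaf med eps (i, \<theta>, \<sigma>) S) \<partial>uniform_measure lborel {0<..<1})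
      = (\<integral>\<^sup>+\<theta>. ennreal (potential \<alpha> (split_leaf med eps (i, \<theta>, \<sigma>) S)) * indicator {0<..<1} \<theta> \<partial>lborel)"
    by (subst nn_integral_uniform_measure) (auto simp: divide_ennreal_def)
  also have "\<dots> \<le> cell_potential \<alpha> S"
    using assms(1,2) True assms(3-8) finite_subset
    by (intro nn_integral_potential_split_leaf_le) auto
  finally show ?thesis .
qed

section \<open>Expectations over the rounds\<close>

lemma prob_space_step_measure: "prob_space (step_measure :: ('d::finite \<times> real \<times> real) measure)"
  unfolding step_measure_def
  by (intro prob_space_pair prob_space_uniform_count_measure prob_space_uniform_measure) auto

lemma nn_integral_step_measure_le:
  fixes f :: "'d::finite \<times> real \<times> real \<Rightarrow> ennreal"
  assumes f: "f \<in> borel_measurable step_measure"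
    and bound: "\<And>i \<sigma>. \<sigma> \<in> {-1, 1} \<Longrightarrow> (\<integral>\<^sup>+\<theta>. f (i, \<theta>, \<sigma>) \<partial>uniform_measure lborel {0<..<1}) \<le> B"
  shows "(\<integral>\<^sup>+x. f x \<partial>step_measure) \<le> B"
proof -
  let ?I = "uniform_count_measure (UNIV :: 'd set)"
  let ?T = "uniform_measure lborel {0<..<1::real}"
  let ?S = "uniform_count_measure {-1::real, 1}"
  interpret I: prob_space ?I by (rule prob_space_uniform_count_measure) auto
  interpret T: prob_space ?T by (rule prob_space_uniform_measure) auto
  interpret S: prob_space ?S by (rule prob_space_uniform_count_measure) auto
  interpret TxS: prob_space "?T \<Otimes>\<^sub>M ?S" by (intro prob_space_pair T.prob_space_axioms S.prob_space_axioms)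
  interpret TS: pair_prob_space ?T ?S ..
  have f': "f \<in> borel_measurable (?I \<Otimes>\<^sub>M (?T \<Otimes>\<^sub>M ?S))"
    using f by (simp add: step_measure_def)
  have "(\<integral>\<^sup>+x. f x \<partial>step_measure) = (\<integral>\<^sup>+i. \<integral>\<^sup>+y. f (i, y) \<partial>(?T \<Otimes>\<^sub>M ?S) \<partial>?I)"
    unfolding step_measure_def by (rule TxS.nn_integral_fst[symmetric, OF f'])
  also have "\<dots> \<le> (\<integral>\<^sup>+i. B \<partial>?I)"
  proof (intro nn_integral_mono)
    fix i :: 'd
    have "(\<lambda>y. f (i, y)) \<in> borel_measurable (?T \<Otimes>\<^sub>M ?S)"
      by (rule measurable_Pair2[OF f']) (simp add: space_uniform_count_measure)
    from TS.nn_integral_snd[OF this]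
    have "(\<integral>\<^sup>+y. f (i, y) \<partial>(?T \<Otimes>\<^sub>M ?S)) = (\<integral>\<^sup>+\<sigma>. \<integral>\<^sup>+\<theta>. f (i, \<theta>, \<sigma>) \<partial>?T \<partial>?S)"
      by simp
    also have "\<dots> \<le> (\<integral>\<^sup>+\<sigma>. B \<partial>?S)"
      by (intro nn_integral_mono) (auto simp: space_uniform_count_measure intro: bound)
    finally show "(\<integral>\<^sup>+y. f (i, y) \<partial>(?T \<Otimes>\<^sub>M ?S)) \<le> B"
      using S.emeasure_space_1 by simp
  qed
  finally show ?thesis using I.emeasure_space_1 by simp
qed

lemma nn_integral_potential_refine_leaves:
  fixes C :: "(real^'d) set"
  assumes "finite C" "\<And>S. S \<subseteq> C \<Longrightarrow> S \<noteq> {} \<Longrightarrow> is_median S (med S)"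
    and "0 \<le> eps" "eps < 1" "0 \<le> \<alpha>" "2 powr \<alpha> = ((1+eps)/(1-eps))\<^sup>2"
  shows "Ls \<in> lists (Pow C - {{}}) \<Longrightarrow>
    (\<integral>\<^sup>+x. potential \<alpha> (refine_leaves med eps x Ls) \<partial>step_measure) \<le> potential \<alpha> Ls"
proof (induction Ls)
  case Nil
  then show ?case by (simp add: refine_leaves_def potential_def)
next
  case (Cons S Ls)
  then have "S \<subseteq> C" "S \<noteq> {}" "Ls \<in> lists (Pow C)" by auto
  have sum: "ennreal (potential \<alpha> (refine_leaves med eps x (S # Ls)))
      = ennreal (potential \<alpha> (split_leaf med eps x S)) + ennreal (potential \<alpha> (refine_leaves med eps x Ls))"
    for x
    by (simp add: refine_leaves_def potential_append potential_nonneg ennreal_plus)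
  have split_meas: "(\<lambda>x. ennreal (potential \<alpha> (split_leaf med eps x S))) \<in> borel_measurable step_measure"
    using measurable_split_leaf[OF assms(1) \<open>S \<subseteq> C\<close>] measurable_ennreal_count_space
    by (rule measurable_compose)
  have refine_meas: "(\<lambda>x. ennreal (potential \<alpha> (refine_leaves med eps x Ls))) \<in> borel_measurable step_measure"
    using measurable_refine_leaves[OF assms(1) \<open>Ls \<in> lists (Pow C)\<close>] measurable_ennreal_count_space
    by (rule measurable_compose)
  have "(\<integral>\<^sup>+x. potential \<alpha> (split_leaf med eps x S) \<partial>step_measure) \<le> cell_potential \<alpha> S"
    using assms \<open>S \<subseteq> C\<close> \<open>S \<noteq> {}\<close>
    by (intro nn_integral_step_measure_le[OF split_meas] nn_integral_potential_split_leaf_section) auto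
  moreover have "(\<integral>\<^sup>+x. potential \<alpha> (refine_leaves med eps x Ls) \<partial>step_measure) \<le> potential \<alpha> Ls"
    using Cons by simp
  ultimately have "(\<integral>\<^sup>+x. potential \<alpha> (refine_leaves med eps x (S # Ls)) \<partial>step_measure)
      \<le> ennreal (cell_potential \<alpha> S) + potential \<alpha> Ls"
    unfolding sum by (simp add: nn_integral_add[OF split_meas refine_meas] add_mono)
  also have "\<dots> = potential \<alpha> (S # Ls)"
    using potential_nonneg[of \<alpha> "[S]"] potential_nonneg[of \<alpha> Ls]
    by (simp add: potential_def ennreal_plus)
  finally show ?case .
qed

lemma prob_space_rounds_measure: "prob_space (rounds_measure :: (nat \<Rightarrow> 'd::finite \<times> real \<times> real) measure)"
  unfolding rounds_measure_def
  by (intro prob_space_PiM prob_space_step_measure)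

lemma nn_integral_rounds_measure_Suc:
  fixes \<Phi> :: "(nat \<Rightarrow> 'd::finite \<times> real \<times> real) \<Rightarrow> ennreal"
  assumes "\<Phi> \<in> borel_measurable rounds_measure"
  shows "(\<integral>\<^sup>+\<omega>. \<Phi> \<omega> \<partial>rounds_measure) = (\<integral>\<^sup>+x. \<integral>\<^sup>+\<omega>. \<Phi> (case_nat x \<omega>) \<partial>rounds_measure \<partial>step_measure)"
proof -
  interpret step: prob_space "step_measure :: ('d \<times> real \<times> real) measure"
    by (rule prob_space_step_measure)
  interpret rounds: sequence_space "step_measure :: ('d \<times> real \<times> real) measure" ..
  have rounds_eq: "rounds_measure = rounds.S"
    unfolding rounds_measure_def ..
  have cons: "(\<lambda>(x, \<omega>). case_nat x \<omega>) \<in> measurable (step_measure \<Otimes>\<^sub>M rounds.S) rounds.S"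
    by measurable
  have "(\<integral>\<^sup>+\<omega>. \<Phi> \<omega> \<partial>rounds_measure)
      = (\<integral>\<^sup>+\<omega>. \<Phi> \<omega> \<partial>distr (step_measure \<Otimes>\<^sub>M rounds.S) rounds.S (\<lambda>(x, \<omega>). case_nat x \<omega>))"
    unfolding rounds_eq rounds.PiM_iter ..
  also have "\<dots> = (\<integral>\<^sup>+y. \<Phi> (case_nat (fst y) (snd y)) \<partial>(step_measure \<Otimes>\<^sub>M rounds.S))"
    using cons assms by (subst nn_integral_distr) (simp_all add: split_beta' rounds_eq)
  also have "\<dots> = (\<integral>\<^sup>+x. \<integral>\<^sup>+\<omega>. \<Phi> (case_nat x \<omega>) \<partial>rounds.S \<partial>step_measure)"
    using measurable_compose[OF cons assms[unfolded rounds_eq]]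
    by (subst rounds.nn_integral_fst[symmetric]) (simp_all add: split_beta')
  finally show ?thesis unfolding rounds_eq .
qed

lemma nn_integral_potential_leaves_after:
  fixes C :: "(real^'d) set"
  assumes "finite C" "\<And>S. S \<subseteq> C \<Longrightarrow> S \<noteq> {} \<Longrightarrow> is_median S (med S)"
    and "0 \<le> eps" "eps < 1" "0 \<le> \<alpha>" "2 powr \<alpha> = ((1+eps)/(1-eps))\<^sup>2"
  shows "Ls \<in> lists (Pow C - {{}}) \<Longrightarrow>
    (\<integral>\<^sup>+\<omega>. potential \<alpha> (leaves_after med eps Ls \<omega> t) \<partial>rounds_measure) \<le> potential \<alpha> Ls"
proof (induction t arbitrary: Ls)
  case 0
  then show ?case
    by (simp add: prob_space.emeasure_space_1[OF prob_space_rounds_measure])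
next
  case (Suc t)
  have "Ls \<in> lists (Pow C)" using Suc.prems by auto
  have "(\<lambda>\<omega>. ennreal (potential \<alpha> (leaves_after med eps Ls \<omega> (Suc t)))) \<in> borel_measurable rounds_measure"
    by (rule measurable_compose[OF measurable_leaves_after[OF assms(1) \<open>Ls \<in> lists (Pow C)\<close>]
          measurable_ennreal_count_space])
  then have "(\<integral>\<^sup>+\<omega>. potential \<alpha> (leaves_after med eps Ls \<omega> (Suc t)) \<partial>rounds_measure)
      = (\<integral>\<^sup>+x. \<integral>\<^sup>+\<omega>. potential \<alpha> (leaves_after med eps (refine_leaves med eps x Ls) \<omega> t)
            \<partial>rounds_measure \<partial>step_measure)"
    by (simp add: nn_integral_rounds_measure_Suc leaves_after_Suc_shift del: leaves_after.simps)
  also have "\<dots> \<le> (\<integral>\<^sup>+x. potential \<alpha> (refine_leaves med eps x Ls) \<partial>step_measure)"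
    using Suc.IH[OF refine_leaves_subsets[OF Suc.prems]] by (intro nn_integral_mono)
  also have "\<dots> \<le> potential \<alpha> Ls"
    by (rule nn_integral_potential_refine_leaves[OF assms Suc.prems])
  finally show ?case .
qed

lemma nn_integral_output_leaves_le_potential:
  fixes C :: "(real^'d) set"
  assumes "finite C" "C \<noteq> {}" "\<And>S. S \<subseteq> C \<Longrightarrow> S \<noteq> {} \<Longrightarrow> is_median S (med S)"
    and "0 \<le> eps" "eps < 1" "0 \<le> \<alpha>" "2 powr \<alpha> = ((1+eps)/(1-eps))\<^sup>2"
  shows "(\<integral>\<^sup>+\<omega>. output_leaves med eps C \<omega> \<partial>rounds_measure) \<le> cell_potential \<alpha> C"
proof -
  define f where "f = (\<lambda>t \<omega>. ennreal (real (length (leaves_after med eps [C] \<omega> t))))"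
  have "[C] \<in> lists (Pow C - {{}})" using assms(2) by simp
  have "incseq f"
    unfolding incseq_Suc_iff le_fun_def f_def by (simp add: length_le_length_refine_leaves)
  moreover have "f t \<in> borel_measurable rounds_measure" for t
    unfolding f_def
    by (rule measurable_compose[OF measurable_leaves_after[OF assms(1)] measurable_ennreal_count_space])
      simp
  ultimately have "(\<integral>\<^sup>+\<omega>. output_leaves med eps C \<omega> \<partial>rounds_measure) = (SUP t. \<integral>\<^sup>+\<omega>. f t \<omega> \<partial>rounds_measure)"
    unfolding output_leaves_def num_leaves_eq_length_leaf_sets leaf_sets_alg_tree f_def
    by (rule nn_integral_monotone_convergence_SUP)
  also have "\<dots> \<le> potential \<alpha> [C]"
  proof (intro SUP_least)
    fix t
    have "f t \<omega> \<le> potential \<alpha> (leaves_after med eps [C] \<omega> t)" for \<omega>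
      using leaves_after_subsets[OF \<open>[C] \<in> lists (Pow C - {{}})\<close>, of med eps \<omega> t] \<open>finite C\<close> \<open>0 \<le> \<alpha>\<close>
      unfolding f_def by (intro ennreal_leI length_le_potential) (auto intro: finite_subset)
    then have "(\<integral>\<^sup>+\<omega>. f t \<omega> \<partial>rounds_measure)
        \<le> (\<integral>\<^sup>+\<omega>. potential \<alpha> (leaves_after med eps [C] \<omega> t) \<partial>rounds_measure)"
      by (intro nn_integral_mono)
    also have "\<dots> \<le> potential \<alpha> [C]"
      using nn_integral_potential_leaves_after[OF assms(1,3-7) \<open>[C] \<in> lists (Pow C - {{}})\<close>] .
    finally show "(\<integral>\<^sup>+\<omega>. f t \<omega> \<partial>rounds_measure) \<le> potential \<alpha> [C]" .
  qed
  finally show ?thesis by (simp add: potential_def)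
qed

section \<open>The exponent\<close>

lemma two_powr_two_log: "0 < r \<Longrightarrow> 2 powr (2 * log 2 r) = r\<^sup>2"
  by (simp add: powr_powr[symmetric] mult.commute[of 2] powr_numeral)

lemma ln_ratio_le:
  fixes \<epsilon> :: real
  assumes "0 \<le> \<epsilon>" "\<epsilon> \<le> 1/320"
  shows "ln ((1+\<epsilon>)/(1-\<epsilon>)) \<le> (640/319) * \<epsilon>"
proof -
  have "ln ((1+\<epsilon>)/(1-\<epsilon>)) \<le> (1+\<epsilon>)/(1-\<epsilon>) - 1"
    using assms by (intro ln_le_minus_one) simp
  also have "\<dots> = 2 * \<epsilon> / (1-\<epsilon>)"
    using assms by (simp add: field_simps)
  also have "\<dots> \<le> 2 * \<epsilon> / (319/320)"
    using assms by (intro divide_left_mono) auto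
  finally show ?thesis by simp
qed

lemma powr_exponent_le:
  fixes k \<epsilon> \<delta> :: real
  assumes "1 \<le> k" "0 \<le> \<epsilon>" "\<epsilon> \<le> 1/320" "\<epsilon> * ln k \<le> \<delta> / 15" "\<delta> \<le> 1"
  shows "k powr (2 * log 2 ((1+\<epsilon>)/(1-\<epsilon>))) \<le> 1 + \<delta>"
proof -
  define x where "x = 2 * log 2 ((1+\<epsilon>)/(1-\<epsilon>)) * ln k"
  have "0 \<le> ln ((1+\<epsilon>)/(1-\<epsilon>))" "0 \<le> ln k"
    using assms by simp_all
  then have "0 \<le> x" by (simp add: x_def log_def)
  have "2/3 \<le> ln (2::real)" by (rule ln2_ge_two_thirds)
  have "x = 2 * ln ((1+\<epsilon>)/(1-\<epsilon>)) * ln k / ln 2"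
    by (simp add: x_def log_def)
  also have "\<dots> \<le> 2 * ((640/319) * \<epsilon>) * ln k / (2/3)"
    using ln_ratio_le[OF assms(2,3)] \<open>0 \<le> ln k\<close> \<open>2/3 \<le> ln 2\<close> \<open>0 \<le> \<epsilon>\<close>
    by (intro frac_le mult_right_mono mult_left_mono) auto
  also have "\<dots> = (1920/319) * (\<epsilon> * ln k)" by simp
  also have "\<dots> \<le> (128/319) * \<delta>"
    using assms(4) by simp
  finally have "x \<le> (128/319) * \<delta>" .
  with \<open>0 \<le> x\<close> assms(5) have "norm (exp x) \<le> 1 + 2 * norm x"
    by (intro exp_bound_lemma) simp
  moreover have "k powr (2 * log 2 ((1+\<epsilon>)/(1-\<epsilon>))) = exp x"
    using assms(1) by (simp add: powr_def x_def mult.commute)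
  ultimately show ?thesis
    using \<open>0 \<le> x\<close> \<open>x \<le> (128/319) * \<delta>\<close> assms(5) by simp
qed

lemma alg_eps_bounds:
  assumes "0 < \<delta>" "1 \<le> k"
  shows "0 \<le> alg_eps \<delta> k" and "alg_eps \<delta> k \<le> 1/320" and "alg_eps \<delta> k * ln k \<le> \<delta> / 15"
proof -
  have "0 \<le> ln (real k)" using assms by simp
  then show "0 \<le> alg_eps \<delta> k" using assms by (simp add: alg_eps_def)
  show "alg_eps \<delta> k \<le> 1/320" by (simp add: alg_eps_def)
  show "alg_eps \<delta> k * ln k \<le> \<delta> / 15"
  proof (cases "ln (real k) = 0")
    case False
    with \<open>0 \<le> ln (real k)\<close> have "alg_eps \<delta> k * ln k \<le> \<delta> / (15 * ln k) * ln k"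
      by (intro mult_right_mono) (simp_all add: alg_eps_def)
    with False show ?thesis by simp
  qed (use assms in simp)
qed

theorem theorem4:
  fixes C :: "(real^'d) set"
    and med :: "(real^'d) set \<Rightarrow> real^'d"
    and \<delta> :: real
  assumes "finite C" and "C \<noteq> {}"
    and "0 < \<delta>" and "\<delta> < 1"
    and "\<And>S. S \<subseteq> C \<Longrightarrow> S \<noteq> {} \<Longrightarrow> is_median S (med S)"
  shows "(\<integral>\<^sup>+ \<omega>. output_leaves med (alg_eps \<delta> (card C)) C \<omega> \<partial>rounds_measure)
           \<le> ennreal ((1 + \<delta>) * real (card C))"
proof -
  define k where "k = card C"
  define \<epsilon> where "\<epsilon> = alg_eps \<delta> k"
  define \<alpha> where "\<alpha> = 2 * log 2 ((1+\<epsilon>)/(1-\<epsilon>))"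
  have "1 \<le> k" using assms(1,2) by (simp add: k_def Suc_le_eq card_gt_0_iff)
  have \<epsilon>: "0 \<le> \<epsilon>" "\<epsilon> \<le> 1/320" "\<epsilon> * ln k \<le> \<delta> / 15"
    unfolding \<epsilon>_def using alg_eps_bounds[OF assms(3) \<open>1 \<le> k\<close>] by auto
  then have "0 \<le> \<alpha>" "2 powr \<alpha> = ((1+\<epsilon>)/(1-\<epsilon>))\<^sup>2"
    by (simp_all add: \<alpha>_def two_powr_two_log)
  with \<epsilon> have "(\<integral>\<^sup>+ \<omega>. output_leaves med \<epsilon> C \<omega> \<partial>rounds_measure) \<le> cell_potential \<alpha> C"
    by (intro nn_integral_output_leaves_le_potential assms) auto
  also have "\<dots> \<le> ennreal ((1 + \<delta>) * k)"
  proof (rule ennreal_leI)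
    have "cell_potential \<alpha> C = k * k powr \<alpha>"
      by (simp add: cell_potential_def k_def)
    also have "\<dots> \<le> k * (1 + \<delta>)"
      using powr_exponent_le[OF _ \<epsilon>] \<open>1 \<le> k\<close> assms(4) by (simp add: \<alpha>_def)
    finally show "cell_potential \<alpha> C \<le> (1 + \<delta>) * k"
      by (simp add: mult.commute)
  qed
  finally show ?thesis
    by (simp add: \<epsilon>_def k_def)
qed

end
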